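(* Let $G$ be a group with a regular gliding system. For any set $\mathcal{D}\subset G$, the glide complex $X_{\mathcal{D}}$ is nonpositively curved if and only if $\mathcal{D}$ satisfies the cube condition. In particular, $X_G$ is nonpositively curved.
   Context: Gliding system $(\mathcal{G},\mathcal{I})$ in $G$: $\mathcal{G}\subset G\setminus\{1\}$ closed under inversion (glides), $\mathcal{I}\subset\mathcal{G}\times\mathcal{G}$ (independence) with $(s^{-1},t),(t,s)\in\mathcal{I}$ and $st=ts\ne1$ whenever $(s,t)\in\mathcal{I}$. Pre-cubic set: finite set $S$ of pairwise independent glides, $[S]=\prod_{s\in S}s$; cubic: pre-cubic with $[T_1]\ne[T_2]$ for distinct $T_1,T_2\subset S$. The gliding system is regular if every pre-cubic set is cubic. Glide complex $X_G$: cubed complex with one $k$-cube for each equivalence class of based cubes $(A,S)$ ($A\in G$, $S$ cubic of size $k$) under $(A,S)\sim([T]A,(S\setminus T)\cup\{t^{-1}:t\in T\})$, $T\subset S$; vertices $[T]A$, faces the cubes of $(A,S')$, $S'\subset S$. $X_{\mathcal{D}}$: subcomplex of cubes all of whose vertices lie in $\mathcal{D}$. Cube condition on $\mathcal{D}$: for every $A\in\mathcal{D}$ and pairwise independent glides $s_1,s_2,s_3$ with $s_iA\in\mathcal{D}$ and $s_is_jA\in\mathcal{D}$ for all $i\ne j$, one has $s_1s_2s_3A\in\mathcal{D}$. Nonpositively curved: links of $0$-cells are simplicial flag complexes. *)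

theory Defs
  imports "HOL-Algebra.Group"
begin

definition gliding_system :: "('a,'b) monoid_scheme \<Rightarrow> 'a set \<Rightarrow> ('a \<times> 'a) set \<Rightarrow> bool" where
  "gliding_system G Gl Ind \<longleftrightarrow>
     group G \<and> Gl \<subseteq> carrier G - {\<one>\<^bsub>G\<^esub>} \<and> (\<forall>s\<in>Gl. inv\<^bsub>G\<^esub> s \<in> Gl) \<and> Ind \<subseteq> Gl \<times> Gl \<and>
     (\<forall>s t. (s,t) \<in> Ind \<longrightarrow> (inv\<^bsub>G\<^esub> s, t) \<in> Ind \<and> (t, s) \<in> Ind \<and>
              s \<otimes>\<^bsub>G\<^esub> t = t \<otimes>\<^bsub>G\<^esub> s \<and> s \<otimes>\<^bsub>G\<^esub> t \<noteq> \<one>\<^bsub>G\<^esub>)"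

text \<open>[S]: product of a finite set of pairwise commuting elements (in any enumeration order).\<close>
definition gprod :: "('a,'b) monoid_scheme \<Rightarrow> 'a set \<Rightarrow> 'a" where
  "gprod G S = foldr (\<lambda>x y. x \<otimes>\<^bsub>G\<^esub> y) (SOME xs. distinct xs \<and> set xs = S) \<one>\<^bsub>G\<^esub>"

definition precubic :: "'a set \<Rightarrow> ('a \<times> 'a) set \<Rightarrow> 'a set \<Rightarrow> bool" where
  "precubic Gl Ind S \<longleftrightarrow> finite S \<and> S \<subseteq> Gl \<and> (\<forall>s\<in>S. \<forall>t\<in>S. s \<noteq> t \<longrightarrow> (s,t) \<in> Ind)"

definition cubic :: "('a,'b) monoid_scheme \<Rightarrow> 'a set \<Rightarrow> ('a \<times> 'a) set \<Rightarrow> 'a set \<Rightarrow> bool" where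
  "cubic G Gl Ind S \<longleftrightarrow> precubic Gl Ind S \<and>
     (\<forall>T1 T2. T1 \<subseteq> S \<longrightarrow> T2 \<subseteq> S \<longrightarrow> T1 \<noteq> T2 \<longrightarrow> gprod G T1 \<noteq> gprod G T2)"

definition regular_gliding :: "('a,'b) monoid_scheme \<Rightarrow> 'a set \<Rightarrow> ('a \<times> 'a) set \<Rightarrow> bool" where
  "regular_gliding G Gl Ind \<longleftrightarrow> (\<forall>S. precubic Gl Ind S \<longrightarrow> cubic G Gl Ind S)"

text \<open>Based cube (A,S) whose cube lies in X_D (all vertices [T]A in D).\<close>
definition based_cube_in :: "('a,'b) monoid_scheme \<Rightarrow> 'a set \<Rightarrow> ('a \<times> 'a) set \<Rightarrow> 'a set \<Rightarrow> 'a \<Rightarrow> 'a set \<Rightarrow> bool" where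
  "based_cube_in G Gl Ind D A S \<longleftrightarrow> A \<in> carrier G \<and> cubic G Gl Ind S \<and>
     (\<forall>T. T \<subseteq> S \<longrightarrow> gprod G T \<otimes>\<^bsub>G\<^esub> A \<in> D)"

text \<open>An abstract cell structure (link): vertex set, cells, vertex map, number of corners of each cell.\<close>
definition simplicial_flag :: "'v set \<Rightarrow> 'c set \<Rightarrow> ('c \<Rightarrow> 'v set) \<Rightarrow> ('c \<Rightarrow> nat) \<Rightarrow> bool" where
  "simplicial_flag V C vo nv \<longleftrightarrow>
     inj_on vo C \<and> (\<forall>c\<in>C. vo c \<subseteq> V \<and> card (vo c) = nv c) \<and>
     (\<forall>F. finite F \<and> F \<noteq> {} \<and> F \<subseteq> V \<and> (\<forall>u\<in>F. \<forall>w\<in>F. u \<noteq> w \<longrightarrow> {u,w} \<in> vo ` C)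
          \<longrightarrow> F \<in> vo ` C)"

text \<open>Link of the vertex A in X_D: one simplex per corner at A of a cube of X_D, i.e. per based
  cube (A,S) in X_D with S nonempty; its vertices are the corners (A,{s}) of the edges at A.\<close>
definition link_cells :: "('a,'b) monoid_scheme \<Rightarrow> 'a set \<Rightarrow> ('a \<times> 'a) set \<Rightarrow> 'a set \<Rightarrow> 'a \<Rightarrow> ('a \<times> 'a set) set" where
  "link_cells G Gl Ind D A = {(A,S) | S. S \<noteq> {} \<and> based_cube_in G Gl Ind D A S}"

definition link_verts :: "('a,'b) monoid_scheme \<Rightarrow> 'a set \<Rightarrow> ('a \<times> 'a) set \<Rightarrow> 'a set \<Rightarrow> 'a \<Rightarrow> ('a \<times> 'a set) set" where
  "link_verts G Gl Ind D A = {(A,{s}) | s. based_cube_in G Gl Ind D A {s}}"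

definition nonpositively_curved :: "('a,'b) monoid_scheme \<Rightarrow> 'a set \<Rightarrow> ('a \<times> 'a) set \<Rightarrow> 'a set \<Rightarrow> bool" where
  "nonpositively_curved G Gl Ind D \<longleftrightarrow>
     (\<forall>A\<in>D. simplicial_flag (link_verts G Gl Ind D A) (link_cells G Gl Ind D A)
               (\<lambda>(B,S). (\<lambda>s. (B,{s})) ` S) (\<lambda>(B,S). card S))"

definition cube_condition :: "('a,'b) monoid_scheme \<Rightarrow> 'a set \<Rightarrow> ('a \<times> 'a) set \<Rightarrow> 'a set \<Rightarrow> bool" where
  "cube_condition G Gl Ind D \<longleftrightarrow>
     (\<forall>A\<in>D. \<forall>s1 s2 s3.
        (s1,s2) \<in> Ind \<and> (s1,s3) \<in> Ind \<and> (s2,s3) \<in> Ind \<and>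
        s1 \<otimes>\<^bsub>G\<^esub> A \<in> D \<and> s2 \<otimes>\<^bsub>G\<^esub> A \<in> D \<and> s3 \<otimes>\<^bsub>G\<^esub> A \<in> D \<and>
        s1 \<otimes>\<^bsub>G\<^esub> s2 \<otimes>\<^bsub>G\<^esub> A \<in> D \<and> s1 \<otimes>\<^bsub>G\<^esub> s3 \<otimes>\<^bsub>G\<^esub> A \<in> D \<and> s2 \<otimes>\<^bsub>G\<^esub> s3 \<otimes>\<^bsub>G\<^esub> A \<in> D
        \<longrightarrow> s1 \<otimes>\<^bsub>G\<^esub> s2 \<otimes>\<^bsub>G\<^esub> s3 \<otimes>\<^bsub>G\<^esub> A \<in> D)"

end

theory Submission
  imports Defs
begin

(* Say that D fills the corners at a vertex A if every
   cube (A,S) whose vertices [T]A with |T| <= 2 lie in D (the vertices of the faces of dimension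
   at most two containing the corner A) lies entirely in X_D. We show
     (1) the link of A is flag  <->  D fills the corners at A, since a clique of the link is
         exactly such a set S of glides, and regularity makes every precubic S cubic;
     (2) the cube condition  <->  D fills the corners at every A in D; one direction is the
         case |S| = 3, the other is an induction on |T| that reaches [T]A as the far corner of
         a 3-cube whose other vertices have fewer glides. *)

section \<open>Products of pairwise commuting elements\<close>

text \<open>A product of a list of pairwise commuting elements does not depend on the order of the
  factors, so the product [S] of a finite commuting set can be computed from any enumeration.\<close>

context monoid
begin

lemma foldr_mult_closed: "set xs \<subseteq> carrier G \<Longrightarrow> foldr (\<otimes>) xs \<one> \<in> carrier G"
  by (induction xs) auto

lemma foldr_mult_remove1:
  assumes "a \<in> set xs" "set xs \<subseteq> carrier G" "pairwise (\<lambda>x y. x \<otimes> y = y \<otimes> x) (set xs)"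
  shows "foldr (\<otimes>) xs \<one> = a \<otimes> foldr (\<otimes>) (remove1 a xs) \<one>"
  using assms
proof (induction xs)
  case (Cons b xs)
  show ?case
  proof (cases "b = a")
    case False
    have a: "a \<in> set xs" and car: "a \<in> carrier G" "b \<in> carrier G" "set xs \<subseteq> carrier G"
      using Cons.prems(1,2) False by auto
    have IH: "foldr (\<otimes>) xs \<one> = a \<otimes> foldr (\<otimes>) (remove1 a xs) \<one>"
      using a car(3) pairwise_subset[OF Cons.prems(3)] by (intro Cons.IH) auto
    have rest: "foldr (\<otimes>) (remove1 a xs) \<one> \<in> carrier G"
      using car(3) set_remove1_subset[of a xs] by (intro foldr_mult_closed) blast
    have ba: "b \<otimes> a = a \<otimes> b"
      using pairwiseD(1)[OF Cons.prems(3)] Cons.prems(1) False by simp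
    have "b \<otimes> (a \<otimes> R) = a \<otimes> (b \<otimes> R)" if "R \<in> carrier G" for R
      using that car ba by (metis m_assoc)
    then show ?thesis
      using False IH rest by simp
  qed simp
qed simp

lemma foldr_mult_perm:
  assumes "distinct xs" "distinct ys" "set xs = set ys" "set xs \<subseteq> carrier G"
    "pairwise (\<lambda>x y. x \<otimes> y = y \<otimes> x) (set xs)"
  shows "foldr (\<otimes>) xs \<one> = foldr (\<otimes>) ys \<one>"
  using assms
proof (induction xs arbitrary: ys)
  case (Cons a xs)
  have "set (remove1 a ys) = set xs"
    using Cons.prems(1,2,3) by auto
  then have "foldr (\<otimes>) xs \<one> = foldr (\<otimes>) (remove1 a ys) \<one>"
    using Cons.prems pairwise_subset[OF Cons.prems(5) set_subset_Cons] by (intro Cons.IH) auto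
  moreover have "foldr (\<otimes>) ys \<one> = a \<otimes> foldr (\<otimes>) (remove1 a ys) \<one>"
    using Cons.prems by (intro foldr_mult_remove1) auto
  ultimately show ?case by simp
qed simp

lemma gprod_enumeration:
  assumes "finite T"
  obtains xs where "distinct xs" "set xs = T" "gprod G T = foldr (\<otimes>) xs \<one>"
proof -
  have "\<exists>xs. distinct xs \<and> set xs = T"
    using finite_distinct_list[OF assms] by blast
  then have "distinct (SOME xs. distinct xs \<and> set xs = T) \<and> set (SOME xs. distinct xs \<and> set xs = T) = T"
    by (rule someI_ex)
  then show ?thesis
    using that unfolding gprod_def by blast
qed

lemma gprod_eq_foldr:
  assumes "distinct xs" "set xs = T" "T \<subseteq> carrier G" "pairwise (\<lambda>x y. x \<otimes> y = y \<otimes> x) T"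
  shows "gprod G T = foldr (\<otimes>) xs \<one>"
proof -
  obtain zs where zs: "distinct zs" "set zs = T" "gprod G T = foldr (\<otimes>) zs \<one>"
    using gprod_enumeration[of T] assms(2) by blast
  have "foldr (\<otimes>) zs \<one> = foldr (\<otimes>) xs \<one>"
    using foldr_mult_perm[OF zs(1) assms(1)] zs(2) assms(2-4) by simp
  with zs(3) show ?thesis by simp
qed

lemma gprod_closed:
  assumes "finite T" "T \<subseteq> carrier G"
  shows "gprod G T \<in> carrier G"
  using gprod_enumeration[OF assms(1)] foldr_mult_closed assms(2) by metis

lemma gprod_empty: "gprod G {} = \<one>"
  using gprod_eq_foldr[of "[]" "{}"] by simp

lemma gprod_insert:
  assumes "finite T" "insert x T \<subseteq> carrier G" "x \<notin> T"
    "pairwise (\<lambda>x y. x \<otimes> y = y \<otimes> x) (insert x T)"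
  shows "gprod G (insert x T) = x \<otimes> gprod G T"
proof -
  obtain xs where xs: "distinct xs" "set xs = T"
    using assms(1) finite_distinct_list by blast
  have "gprod G (insert x T) = foldr (\<otimes>) (x # xs) \<one>"
    using xs assms(2-4) by (intro gprod_eq_foldr) simp_all
  moreover have "gprod G T = foldr (\<otimes>) xs \<one>"
    using xs assms(2) pairwise_subset[OF assms(4) subset_insertI] by (intro gprod_eq_foldr) simp_all
  ultimately show ?thesis by simp
qed

end

lemma gliding_systemD:
  assumes "gliding_system G Gl Ind"
  shows "group G" "Gl \<subseteq> carrier G" "Ind \<subseteq> Gl \<times> Gl"
    "\<And>s t. (s,t) \<in> Ind \<Longrightarrow> (inv\<^bsub>G\<^esub> s, t) \<in> Ind"
    "\<And>s t. (s,t) \<in> Ind \<Longrightarrow> (t, s) \<in> Ind"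
    "\<And>s t. (s,t) \<in> Ind \<Longrightarrow> s \<otimes>\<^bsub>G\<^esub> t = t \<otimes>\<^bsub>G\<^esub> s"
    "\<And>s t. (s,t) \<in> Ind \<Longrightarrow> s \<otimes>\<^bsub>G\<^esub> t \<noteq> \<one>\<^bsub>G\<^esub>"
  using assms unfolding gliding_system_def by (simp_all only: simp_thms) blast

text \<open>Independence is symmetric and irreflexive, and independent glides commute:
  (s,s) independent would force (inv s, s) independent, but inv s \<otimes> s = 1.\<close>

lemma independent_glides:
  assumes gs: "gliding_system G Gl Ind" and st: "(s,t) \<in> Ind"
  shows "s \<in> Gl" "t \<in> Gl" "(t,s) \<in> Ind" "s \<otimes>\<^bsub>G\<^esub> t = t \<otimes>\<^bsub>G\<^esub> s" "s \<noteq> t"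
proof -
  note gl = gliding_systemD[OF gs]
  show "s \<in> Gl" "t \<in> Gl"
    using gl(3) st by auto
  show "(t,s) \<in> Ind" "s \<otimes>\<^bsub>G\<^esub> t = t \<otimes>\<^bsub>G\<^esub> s"
    using gl(5,6)[OF st] by auto
  show "s \<noteq> t"
  proof
    assume "s = t"
    then have "inv\<^bsub>G\<^esub> s \<otimes>\<^bsub>G\<^esub> s \<noteq> \<one>\<^bsub>G\<^esub>"
      using gl(7)[OF gl(4)[OF st]] by simp
    moreover have "s \<in> carrier G"
      using gl(2) \<open>s \<in> Gl\<close> by blast
    ultimately show False
      using group.l_inv[OF gl(1)] by simp
  qed
qed

lemma precubic_subset: "precubic Gl Ind S \<Longrightarrow> T \<subseteq> S \<Longrightarrow> precubic Gl Ind T"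
  unfolding precubic_def by (meson finite_subset subset_iff)

lemma precubic_carrier: "gliding_system G Gl Ind \<Longrightarrow> precubic Gl Ind S \<Longrightarrow> S \<subseteq> carrier G"
  unfolding precubic_def using gliding_systemD(2) by blast

lemma precubic_commuting:
  assumes gs: "gliding_system G Gl Ind" and S: "precubic Gl Ind S"
  shows "pairwise (\<lambda>x y. x \<otimes>\<^bsub>G\<^esub> y = y \<otimes>\<^bsub>G\<^esub> x) S"
  using S independent_glides(4)[OF gs] unfolding precubic_def pairwise_def by blast

lemma vertex_insert:
  assumes gs: "gliding_system G Gl Ind" and S: "precubic Gl Ind S"
    and "x \<in> S" "U \<subseteq> S" "x \<notin> U" and A: "A \<in> carrier G"
  shows "gprod G (insert x U) \<otimes>\<^bsub>G\<^esub> A = x \<otimes>\<^bsub>G\<^esub> (gprod G U \<otimes>\<^bsub>G\<^esub> A)"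
proof -
  interpret group G by (rule gliding_systemD(1)[OF gs])
  have U: "precubic Gl Ind (insert x U)"
    using assms(3,4) by (intro precubic_subset[OF S]) auto
  have car: "insert x U \<subseteq> carrier G"
    using precubic_carrier[OF gs U] .
  have "finite U"
    using U unfolding precubic_def by simp
  then have "gprod G (insert x U) = x \<otimes>\<^bsub>G\<^esub> gprod G U"
    using car assms(5) precubic_commuting[OF gs U] by (rule gprod_insert)
  moreover have "gprod G U \<in> carrier G"
    using \<open>finite U\<close> car by (intro gprod_closed) auto
  ultimately show ?thesis
    using car A by (simp add: m_assoc)
qed

lemma vertex_empty: "group G \<Longrightarrow> A \<in> carrier G \<Longrightarrow> gprod G {} \<otimes>\<^bsub>G\<^esub> A = A"
  by (simp add: monoid.gprod_empty group.is_monoid)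

lemma pair_cover:
  assumes "T \<subseteq> S" "S \<noteq> {}" "finite T" "card T \<le> 2"
  shows "\<exists>s\<in>S. \<exists>t\<in>S. T \<subseteq> {s,t}"
proof -
  consider "card T = 0" | "card T = 1" | "card T = 2"
    using assms(4) by linarith
  then show ?thesis
  proof cases
    case 1
    then show ?thesis using assms(2,3) by auto
  next
    case 2
    then show ?thesis using assms(1) by (auto simp: card_1_singleton_iff)
  next
    case 3
    then show ?thesis using assms(1) by (auto simp: card_2_iff)
  qed
qed

lemma subset_pair_cases:
  assumes "T \<subseteq> {s,t}"
  shows "T = {} \<or> T = {s} \<or> T = {t} \<or> T = {s,t}"
proof -
  have "T \<in> Pow {s,t}"
    using assms by simp
  then show ?thesis
    by (simp add: Pow_insert) blast
qed

section \<open>Cubes of the glide complex lying in a subcomplex\<close>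

text \<open>For a regular gliding system every precubic set is cubic, so a based cube lies in X_D
  exactly when S is precubic and all its vertices [T]A lie in D.\<close>

lemma based_cube_in_iff:
  assumes reg: "regular_gliding G Gl Ind"
  shows "based_cube_in G Gl Ind D A S \<longleftrightarrow>
    A \<in> carrier G \<and> precubic Gl Ind S \<and> (\<forall>T. T \<subseteq> S \<longrightarrow> gprod G T \<otimes>\<^bsub>G\<^esub> A \<in> D)"
  using reg unfolding based_cube_in_def regular_gliding_def cubic_def by blast

lemma based_cube_in_face:
  assumes reg: "regular_gliding G Gl Ind" and "based_cube_in G Gl Ind D A S" "S' \<subseteq> S"
  shows "based_cube_in G Gl Ind D A S'"
  using assms precubic_subset by (simp add: based_cube_in_iff[OF reg]) blast

text \<open>The vertices [T]A with at most two glides in T are the vertices of the faces of dimension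
  at most two that contain the corner A. The link of A is flag exactly when every cube at A
  whose such vertices all lie in D lies entirely in D; we call this filling the corner at A.\<close>

definition corner_faces_in :: "('a,'b) monoid_scheme \<Rightarrow> 'a set \<Rightarrow> 'a \<Rightarrow> 'a set \<Rightarrow> bool" where
  "corner_faces_in G D A S \<longleftrightarrow> (\<forall>T. T \<subseteq> S \<and> card T \<le> 2 \<longrightarrow> gprod G T \<otimes>\<^bsub>G\<^esub> A \<in> D)"

definition fills_corners :: "('a,'b) monoid_scheme \<Rightarrow> 'a set \<Rightarrow> ('a \<times> 'a) set \<Rightarrow> 'a set \<Rightarrow> 'a \<Rightarrow> bool" where
  "fills_corners G Gl Ind D A \<longleftrightarrow>
     (\<forall>S. precubic Gl Ind S \<and> corner_faces_in G D A S \<longrightarrow> (\<forall>T. T \<subseteq> S \<longrightarrow> gprod G T \<otimes>\<^bsub>G\<^esub> A \<in> D))"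

lemma small_face_in:
  assumes reg: "regular_gliding G Gl Ind" and A: "A \<in> carrier G"
    and S: "precubic Gl Ind S" and corner: "corner_faces_in G D A S"
    and S': "S' \<subseteq> S" "card S' \<le> 2"
  shows "based_cube_in G Gl Ind D A S'"
proof -
  have "finite S'"
    using precubic_subset[OF S S'(1)] unfolding precubic_def by blast
  then have "gprod G T \<otimes>\<^bsub>G\<^esub> A \<in> D" if "T \<subseteq> S'" for T
    using corner S' that card_mono[of S' T] unfolding corner_faces_in_def by force
  then show ?thesis
    using A precubic_subset[OF S S'(1)] by (simp add: based_cube_in_iff[OF reg])
qed

lemma corner_faces_inI:
  assumes gs: "gliding_system G Gl Ind" and A: "A \<in> carrier G" "A \<in> D"
    and S: "precubic Gl Ind S"
    and one: "\<And>x. x \<in> S \<Longrightarrow> x \<otimes>\<^bsub>G\<^esub> A \<in> D"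
    and two: "\<And>x y. x \<in> S \<Longrightarrow> y \<in> S \<Longrightarrow> x \<noteq> y \<Longrightarrow> x \<otimes>\<^bsub>G\<^esub> (y \<otimes>\<^bsub>G\<^esub> A) \<in> D"
  shows "corner_faces_in G D A S"
  unfolding corner_faces_in_def
proof (intro allI impI)
  fix T assume T: "T \<subseteq> S \<and> card T \<le> 2"
  show "gprod G T \<otimes>\<^bsub>G\<^esub> A \<in> D"
  proof (cases "S = {}")
    case True
    then show ?thesis
      using T A vertex_empty[OF gliding_systemD(1)[OF gs]] by simp
  next
    case False
    moreover have "finite T"
      using T S finite_subset unfolding precubic_def by blast
    ultimately obtain x y where xy: "x \<in> S" "y \<in> S" "T \<subseteq> {x,y}"
      using pair_cover[of T S] T by blast
    then have "T = {} \<or> T = {x} \<or> T = {y} \<or> T = {x,y}"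
      by (intro subset_pair_cases)
    then show ?thesis
      using xy A one two vertex_insert[OF gs S _ _ _ A(1)] vertex_empty[OF gliding_systemD(1)[OF gs] A(1)]
      by (cases "x = y") auto
  qed
qed

section \<open>The link of a vertex\<close>

lemma link_cellE:
  assumes "c \<in> link_cells G Gl Ind D A"
  obtains S where "c = (A,S)" "S \<noteq> {}" "based_cube_in G Gl Ind D A S"
  using assms unfolding link_cells_def by blast

lemma link_vert_iff: "(A,{s}) \<in> link_verts G Gl Ind D A \<longleftrightarrow> based_cube_in G Gl Ind D A {s}"
  unfolding link_verts_def by auto

lemma corner_image_eq_iff: "(\<lambda>s. (A,{s})) ` S = (\<lambda>s. (A,{s})) ` S' \<longleftrightarrow> S = S'"
  by (rule inj_image_eq_iff) (auto intro: injI)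

lemma link_simplex_iff:
  "(\<lambda>s. (A,{s})) ` S \<in> (\<lambda>(B,S). (\<lambda>s. (B,{s})) ` S) ` link_cells G Gl Ind D A \<longleftrightarrow>
     S \<noteq> {} \<and> based_cube_in G Gl Ind D A S"
proof
  assume "(\<lambda>s. (A,{s})) ` S \<in> (\<lambda>(B,S). (\<lambda>s. (B,{s})) ` S) ` link_cells G Gl Ind D A"
  then obtain c where c: "c \<in> link_cells G Gl Ind D A" "(\<lambda>s. (A,{s})) ` S = (\<lambda>(B,S). (\<lambda>s. (B,{s})) ` S) c"
    by blast
  obtain S' where "c = (A,S')" "S' \<noteq> {}" "based_cube_in G Gl Ind D A S'"
    using c(1) by (rule link_cellE)
  with c(2) show "S \<noteq> {} \<and> based_cube_in G Gl Ind D A S"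
    by (simp add: corner_image_eq_iff)
next
  assume S: "S \<noteq> {} \<and> based_cube_in G Gl Ind D A S"
  show "(\<lambda>s. (A,{s})) ` S \<in> (\<lambda>(B,S). (\<lambda>s. (B,{s})) ` S) ` link_cells G Gl Ind D A"
  proof (rule image_eqI)
    show "(A,S) \<in> link_cells G Gl Ind D A"
      using S unfolding link_cells_def by blast
  qed simp
qed

lemma link_edge_iff:
  "{(A,{s}),(A,{t})} \<in> (\<lambda>(B,S). (\<lambda>s. (B,{s})) ` S) ` link_cells G Gl Ind D A \<longleftrightarrow>
     based_cube_in G Gl Ind D A {s,t}"
  using link_simplex_iff[of A "{s,t}"] by simp

text \<open>Whatever D is, cells of the link are determined by their vertices and a cell coming from
  a k-cube has k vertices; so the link is flag iff its cliques span simplices.\<close>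

lemma link_flag_iff:
  assumes reg: "regular_gliding G Gl Ind"
  shows "simplicial_flag (link_verts G Gl Ind D A) (link_cells G Gl Ind D A)
           (\<lambda>(B,S). (\<lambda>s. (B,{s})) ` S) (\<lambda>(B,S). card S) \<longleftrightarrow>
         (\<forall>F. finite F \<and> F \<noteq> {} \<and> F \<subseteq> link_verts G Gl Ind D A \<and>
            (\<forall>u\<in>F. \<forall>w\<in>F. u \<noteq> w \<longrightarrow>
               {u,w} \<in> (\<lambda>(B,S). (\<lambda>s. (B,{s})) ` S) ` link_cells G Gl Ind D A)
          \<longrightarrow> F \<in> (\<lambda>(B,S). (\<lambda>s. (B,{s})) ` S) ` link_cells G Gl Ind D A)"
    (is "simplicial_flag ?V ?C ?L _ \<longleftrightarrow> _")
proof -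
  have "inj_on ?L ?C"
  proof (rule inj_onI)
    fix c c' assume "c \<in> ?C" "c' \<in> ?C" and eq: "?L c = ?L c'"
    obtain S where "c = (A,S)"
      using \<open>c \<in> ?C\<close> by (blast elim: link_cellE)
    moreover obtain S' where "c' = (A,S')"
      using \<open>c' \<in> ?C\<close> by (blast elim: link_cellE)
    ultimately show "c = c'"
      using eq by (simp add: corner_image_eq_iff)
  qed
  moreover have "?L c \<subseteq> ?V \<and> card (?L c) = (\<lambda>(B,S). card S) c" if cell: "c \<in> ?C" for c
  proof -
    obtain S where c: "c = (A,S)" and S: "based_cube_in G Gl Ind D A S"
      using cell by (rule link_cellE)
    have "?L c \<subseteq> ?V"
      using based_cube_in_face[OF reg S] by (auto simp: c link_vert_iff)
    moreover have "card (?L c) = card S"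
      unfolding c by (simp add: card_image inj_on_def)
    ultimately show ?thesis
      by (simp add: c)
  qed
  ultimately show ?thesis
    unfolding simplicial_flag_def by simp
qed

lemma squares_span_corner:
  assumes reg: "regular_gliding G Gl Ind" and S: "finite S" "S \<noteq> {}"
    and square: "\<And>s t. s \<in> S \<Longrightarrow> t \<in> S \<Longrightarrow> based_cube_in G Gl Ind D A {s,t}"
  shows "precubic Gl Ind S" "corner_faces_in G D A S"
proof -
  have pair: "precubic Gl Ind {s,t}" if "s \<in> S" "t \<in> S" for s t
    using square[OF that] unfolding based_cube_in_iff[OF reg] by blast
  show "precubic Gl Ind S"
    unfolding precubic_def
  proof (intro conjI ballI impI)
    show "finite S" by (rule S(1))
    have "s \<in> Gl" if "s \<in> S" for s
      using pair[OF that that] unfolding precubic_def by simp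
    then show "S \<subseteq> Gl"
      by blast
    fix s t assume "s \<in> S" "t \<in> S" "s \<noteq> t"
    then show "(s,t) \<in> Ind"
      using pair[of s t] unfolding precubic_def by simp
  qed
  show "corner_faces_in G D A S"
    unfolding corner_faces_in_def
  proof (intro allI impI)
    fix T assume T: "T \<subseteq> S \<and> card T \<le> 2"
    moreover have "finite T"
      using T S(1) finite_subset by blast
    ultimately obtain s t where "s \<in> S" "t \<in> S" "T \<subseteq> {s,t}"
      using pair_cover[of T S] S(2) by blast
    then show "gprod G T \<otimes>\<^bsub>G\<^esub> A \<in> D"
      using square unfolding based_cube_in_def by blast
  qed
qed

text \<open>If D fills the corners at A, the link of A is flag: a clique F of the link is the corner
  image of a set S of glides pairwise spanning squares in X_D, so the cube (A,S) lies in X_D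
  and F is its simplex.\<close>

lemma fills_imp_link_flag:
  assumes reg: "regular_gliding G Gl Ind" and A: "A \<in> carrier G"
    and fill: "fills_corners G Gl Ind D A"
  shows "simplicial_flag (link_verts G Gl Ind D A) (link_cells G Gl Ind D A)
           (\<lambda>(B,S). (\<lambda>s. (B,{s})) ` S) (\<lambda>(B,S). card S)"
    (is "simplicial_flag ?V ?C ?L _")
  unfolding link_flag_iff[OF reg]
proof (intro allI impI)
  fix F assume "finite F \<and> F \<noteq> {} \<and> F \<subseteq> ?V \<and> (\<forall>u\<in>F. \<forall>w\<in>F. u \<noteq> w \<longrightarrow> {u,w} \<in> ?L ` ?C)"
  then have F: "finite F" "F \<noteq> {}" "F \<subseteq> ?V" "\<And>u w. u \<in> F \<Longrightarrow> w \<in> F \<Longrightarrow> u \<noteq> w \<Longrightarrow> {u,w} \<in> ?L ` ?C"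
    by blast+
  define S where "S = {s. (A,{s}) \<in> F}"
  have F_eq: "F = (\<lambda>s. (A,{s})) ` S"
    using F(3) unfolding S_def link_verts_def by auto
  have S_ne: "S \<noteq> {}" and S_fin: "finite S"
    using F(1,2) unfolding F_eq by (auto dest: finite_imageD simp: inj_on_def)
  have square: "based_cube_in G Gl Ind D A {s,t}" if "s \<in> S" "t \<in> S" for s t
  proof (cases "s = t")
    case True
    then show ?thesis using that F(3) S_def by (auto simp: link_vert_iff)
  next
    case False
    then show ?thesis
      using F(4)[of "(A,{s})" "(A,{t})"] that unfolding S_def link_edge_iff by simp
  qed
  have "based_cube_in G Gl Ind D A S"
    using fill squares_span_corner[OF reg S_fin S_ne square] A
    unfolding fills_corners_def by (simp add: based_cube_in_iff[OF reg])
  then show "F \<in> ?L ` ?C"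
    unfolding F_eq link_simplex_iff using S_ne by blast
qed

text \<open>Conversely, if the link of A is flag, the corner image of a precubic S whose corner faces
  at A lie in D is a clique of the link; the simplex it spans is the cube (A,S).\<close>

lemma link_flag_imp_fills:
  assumes reg: "regular_gliding G Gl Ind" and A: "A \<in> carrier G"
    and flag: "simplicial_flag (link_verts G Gl Ind D A) (link_cells G Gl Ind D A)
                 (\<lambda>(B,S). (\<lambda>s. (B,{s})) ` S) (\<lambda>(B,S). card S)"
    (is "simplicial_flag ?V ?C ?L _")
  shows "fills_corners G Gl Ind D A"
  unfolding fills_corners_def
proof (intro allI impI)
  fix S T assume "precubic Gl Ind S \<and> corner_faces_in G D A S" and T: "T \<subseteq> S"
  then have S: "precubic Gl Ind S" and corner: "corner_faces_in G D A S"
    by blast+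
  show "gprod G T \<otimes>\<^bsub>G\<^esub> A \<in> D"
  proof (cases "S = {}")
    case True
    then show ?thesis using corner T unfolding corner_faces_in_def by simp
  next
    case False
    have square: "based_cube_in G Gl Ind D A {s,t}" if "s \<in> S" "t \<in> S" for s t
      using that by (intro small_face_in[OF reg A S corner]) (auto simp: card_insert_if)
    have flagD: "F \<in> ?L ` ?C"
      if "finite F" "F \<noteq> {}" "F \<subseteq> ?V" "\<forall>u\<in>F. \<forall>w\<in>F. u \<noteq> w \<longrightarrow> {u,w} \<in> ?L ` ?C" for F
      using flag that unfolding link_flag_iff[OF reg] by blast
    have "(\<lambda>s. (A,{s})) ` S \<in> ?L ` ?C"
    proof (rule flagD)
      show "finite ((\<lambda>s. (A,{s})) ` S)"
        using S unfolding precubic_def by simp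
      show "(\<lambda>s. (A,{s})) ` S \<noteq> {}"
        using False by simp
      have "(A,{s}) \<in> ?V" if "s \<in> S" for s
        using square[OF that that] by (simp add: link_vert_iff)
      then show "(\<lambda>s. (A,{s})) ` S \<subseteq> ?V"
        by blast
      show "\<forall>u\<in>(\<lambda>s. (A,{s})) ` S. \<forall>w\<in>(\<lambda>s. (A,{s})) ` S. u \<noteq> w \<longrightarrow> {u,w} \<in> ?L ` ?C"
      proof (intro ballI impI)
        fix u w assume "u \<in> (\<lambda>s. (A,{s})) ` S" "w \<in> (\<lambda>s. (A,{s})) ` S"
        then obtain s t where st: "s \<in> S" "t \<in> S" "u = (A,{s})" "w = (A,{t})"
          by blast
        then show "{u,w} \<in> ?L ` ?C"
          using square[OF st(1,2)] by (simp add: link_edge_iff)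
      qed
    qed
    then show ?thesis
      using T unfolding link_simplex_iff based_cube_in_def by blast
  qed
qed

section \<open>The cube condition fills every corner\<close>

text \<open>The cube condition with all products bracketed to the right, as they arise from vertices.\<close>

lemma cube_conditionD:
  assumes gs: "gliding_system G Gl Ind" and cc: "cube_condition G Gl Ind D"
    and A: "A \<in> D" "A \<in> carrier G"
    and ind: "(s1,s2) \<in> Ind" "(s1,s3) \<in> Ind" "(s2,s3) \<in> Ind"
    and one: "s1 \<otimes>\<^bsub>G\<^esub> A \<in> D" "s2 \<otimes>\<^bsub>G\<^esub> A \<in> D" "s3 \<otimes>\<^bsub>G\<^esub> A \<in> D"
    and two: "s1 \<otimes>\<^bsub>G\<^esub> (s2 \<otimes>\<^bsub>G\<^esub> A) \<in> D" "s1 \<otimes>\<^bsub>G\<^esub> (s3 \<otimes>\<^bsub>G\<^esub> A) \<in> D"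
      "s2 \<otimes>\<^bsub>G\<^esub> (s3 \<otimes>\<^bsub>G\<^esub> A) \<in> D"
  shows "s1 \<otimes>\<^bsub>G\<^esub> (s2 \<otimes>\<^bsub>G\<^esub> (s3 \<otimes>\<^bsub>G\<^esub> A)) \<in> D"
proof -
  interpret group G by (rule gliding_systemD(1)[OF gs])
  have car: "s1 \<in> carrier G" "s2 \<in> carrier G" "s3 \<in> carrier G"
    using ind independent_glides(1,2)[OF gs] gliding_systemD(2)[OF gs] by blast+
  from cc A(1) have "(s1,s2) \<in> Ind \<and> (s1,s3) \<in> Ind \<and> (s2,s3) \<in> Ind \<and>
      s1 \<otimes>\<^bsub>G\<^esub> A \<in> D \<and> s2 \<otimes>\<^bsub>G\<^esub> A \<in> D \<and> s3 \<otimes>\<^bsub>G\<^esub> A \<in> D \<and>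
      s1 \<otimes>\<^bsub>G\<^esub> s2 \<otimes>\<^bsub>G\<^esub> A \<in> D \<and> s1 \<otimes>\<^bsub>G\<^esub> s3 \<otimes>\<^bsub>G\<^esub> A \<in> D \<and> s2 \<otimes>\<^bsub>G\<^esub> s3 \<otimes>\<^bsub>G\<^esub> A \<in> D
      \<longrightarrow> s1 \<otimes>\<^bsub>G\<^esub> s2 \<otimes>\<^bsub>G\<^esub> s3 \<otimes>\<^bsub>G\<^esub> A \<in> D"
    unfolding cube_condition_def by blast
  then show ?thesis
    using ind one two car A(2) by (simp add: m_assoc)
qed

text \<open>A vertex [T]A with three distinct glides s1, s2, s3 in T is the far corner of the 3-cube
  based at [T - {s1,s2,s3}]A; all other vertices of that 3-cube are [U]A with U a proper
  subset of T, so the cube condition puts [T]A in D once all those vertices are.\<close>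

lemma far_corner_in:
  assumes gs: "gliding_system G Gl Ind" and cc: "cube_condition G Gl Ind D"
    and S: "precubic Gl Ind S" and A: "A \<in> carrier G" and T: "T \<subseteq> S"
    and sub: "{s1,s2,s3} \<subseteq> T" and ne: "s1 \<noteq> s2" "s1 \<noteq> s3" "s2 \<noteq> s3"
    and proper: "\<And>U. U \<subset> T \<Longrightarrow> gprod G U \<otimes>\<^bsub>G\<^esub> A \<in> D"
  shows "gprod G T \<otimes>\<^bsub>G\<^esub> A \<in> D"
proof -
  interpret group G by (rule gliding_systemD(1)[OF gs])
  define T' where "T' = T - {s1,s2,s3}"
  have inS: "s1 \<in> S" "s2 \<in> S" "s3 \<in> S" and T'S: "T' \<subseteq> S"
    using sub T unfolding T'_def by auto
  have notin: "s1 \<notin> T'" "s2 \<notin> T'" "s3 \<notin> T'"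
    unfolding T'_def by auto
  have T_eq: "T = insert s1 (insert s2 (insert s3 T'))"
    using sub unfolding T'_def by auto
  have face: "gprod G (U \<union> T') \<otimes>\<^bsub>G\<^esub> A \<in> D"
    if "U \<subseteq> {s1,s2,s3}" "s \<in> {s1,s2,s3}" "s \<notin> U" for U s
    using that sub unfolding T'_def by (intro proper) auto
  define B where "B = gprod G T' \<otimes>\<^bsub>G\<^esub> A"
  have B: "B \<in> carrier G"
    using S T'S A precubic_carrier[OF gs S] unfolding B_def precubic_def
    by (intro m_closed gprod_closed) (auto intro: finite_subset)
  note simps = vertex_insert[OF gs S _ _ _ A] inS T'S notin ne ne[THEN not_sym]
  have "B \<in> D" "s1 \<otimes>\<^bsub>G\<^esub> B \<in> D" "s2 \<otimes>\<^bsub>G\<^esub> B \<in> D" "s3 \<otimes>\<^bsub>G\<^esub> B \<in> D"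
    "s1 \<otimes>\<^bsub>G\<^esub> (s2 \<otimes>\<^bsub>G\<^esub> B) \<in> D" "s1 \<otimes>\<^bsub>G\<^esub> (s3 \<otimes>\<^bsub>G\<^esub> B) \<in> D" "s2 \<otimes>\<^bsub>G\<^esub> (s3 \<otimes>\<^bsub>G\<^esub> B) \<in> D"
    using face[of "{}" s1] face[of "{s1}" s2] face[of "{s2}" s1] face[of "{s3}" s1]
      face[of "{s1,s2}" s3] face[of "{s1,s3}" s2] face[of "{s2,s3}" s1]
    unfolding B_def by (simp_all add: simps)
  moreover have "(s1,s2) \<in> Ind" "(s1,s3) \<in> Ind" "(s2,s3) \<in> Ind"
    using S inS ne unfolding precubic_def by blast+
  ultimately have "s1 \<otimes>\<^bsub>G\<^esub> (s2 \<otimes>\<^bsub>G\<^esub> (s3 \<otimes>\<^bsub>G\<^esub> B)) \<in> D"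
    using cube_conditionD[OF gs cc _ B] by blast
  moreover have "gprod G T \<otimes>\<^bsub>G\<^esub> A = s1 \<otimes>\<^bsub>G\<^esub> (s2 \<otimes>\<^bsub>G\<^esub> (s3 \<otimes>\<^bsub>G\<^esub> B))"
    unfolding T_eq B_def by (simp add: simps)
  ultimately show ?thesis
    by simp
qed

text \<open>By induction on the number of glides, the cube condition fills every corner: vertices with
  at most two glides are given, the others are far corners of 3-cubes.\<close>

lemma cube_condition_fills:
  assumes gs: "gliding_system G Gl Ind" and cc: "cube_condition G Gl Ind D"
    and A: "A \<in> carrier G"
  shows "fills_corners G Gl Ind D A"
  unfolding fills_corners_def
proof (intro allI impI)
  fix S T0 assume "precubic Gl Ind S \<and> corner_faces_in G D A S" and "T0 \<subseteq> S"
  then have S: "precubic Gl Ind S" and corner: "corner_faces_in G D A S"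
    by blast+
  show "gprod G T0 \<otimes>\<^bsub>G\<^esub> A \<in> D"
    using \<open>T0 \<subseteq> S\<close>
  proof (induction "card T0" arbitrary: T0 rule: less_induct)
    case (less T)
    show ?case
    proof (cases "card T \<le> 2")
      case True
      then show ?thesis using corner less.prems unfolding corner_faces_in_def by blast
    next
      case False
      have fin: "finite T"
        using less.prems S finite_subset unfolding precubic_def by blast
      obtain s1 s2 s3 where "{s1,s2,s3} \<subseteq> T" "s1 \<noteq> s2" "s1 \<noteq> s3" "s2 \<noteq> s3"
        using obtain_subset_with_card_n[of 3 T] False card_3_iff
        by (metis not_le_imp_less less_Suc_eq_le numeral_3_eq_3 numeral_2_eq_2)
      moreover have "gprod G U \<otimes>\<^bsub>G\<^esub> A \<in> D" if "U \<subset> T" for U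
        using that less.prems psubset_card_mono[OF fin that] by (intro less.hyps) auto
      ultimately show ?thesis
        using far_corner_in[OF gs cc S A less.prems] by blast
    qed
  qed
qed

text \<open>Conversely, filling the corner spanned by three pairwise independent glides at A is
  exactly the instance of the cube condition at A.\<close>

lemma fills_imp_cube_condition:
  assumes gs: "gliding_system G Gl Ind" and DG: "D \<subseteq> carrier G"
    and fill: "\<And>A. A \<in> D \<Longrightarrow> fills_corners G Gl Ind D A"
  shows "cube_condition G Gl Ind D"
  unfolding cube_condition_def
proof (intro ballI allI impI)
  interpret group G by (rule gliding_systemD(1)[OF gs])
  fix A s1 s2 s3 assume AD: "A \<in> D" and h: "(s1,s2) \<in> Ind \<and> (s1,s3) \<in> Ind \<and> (s2,s3) \<in> Ind \<and>
        s1 \<otimes>\<^bsub>G\<^esub> A \<in> D \<and> s2 \<otimes>\<^bsub>G\<^esub> A \<in> D \<and> s3 \<otimes>\<^bsub>G\<^esub> A \<in> D \<and>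
        s1 \<otimes>\<^bsub>G\<^esub> s2 \<otimes>\<^bsub>G\<^esub> A \<in> D \<and> s1 \<otimes>\<^bsub>G\<^esub> s3 \<otimes>\<^bsub>G\<^esub> A \<in> D \<and> s2 \<otimes>\<^bsub>G\<^esub> s3 \<otimes>\<^bsub>G\<^esub> A \<in> D"
  have A: "A \<in> carrier G"
    using AD DG by blast
  have ind: "(s1,s2) \<in> Ind" "(s1,s3) \<in> Ind" "(s2,s3) \<in> Ind"
    using h by blast+
  note glides = independent_glides[OF gs ind(1)] independent_glides[OF gs ind(2)]
    independent_glides[OF gs ind(3)]
  have car: "s1 \<in> carrier G" "s2 \<in> carrier G" "s3 \<in> carrier G"
    using glides gliding_systemD(2)[OF gs] by blast+
  define S where "S = {s1,s2,s3}"
  have S: "precubic Gl Ind S"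
    using glides ind unfolding precubic_def S_def by auto
  have one: "x \<otimes>\<^bsub>G\<^esub> A \<in> D" if "x \<in> S" for x
    using that h unfolding S_def by auto
  have two: "x \<otimes>\<^bsub>G\<^esub> (y \<otimes>\<^bsub>G\<^esub> A) \<in> D" if "x \<in> S" "y \<in> S" "x \<noteq> y" for x y
  proof -
    have "s2 \<otimes>\<^bsub>G\<^esub> s1 = s1 \<otimes>\<^bsub>G\<^esub> s2" "s3 \<otimes>\<^bsub>G\<^esub> s1 = s1 \<otimes>\<^bsub>G\<^esub> s3" "s3 \<otimes>\<^bsub>G\<^esub> s2 = s2 \<otimes>\<^bsub>G\<^esub> s3"
      using glides by simp_all
    then have "x \<otimes>\<^bsub>G\<^esub> y \<otimes>\<^bsub>G\<^esub> A \<in> D"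
      using that h unfolding S_def by auto
    then show ?thesis
      using that car A unfolding S_def by (auto simp: m_assoc)
  qed
  have "corner_faces_in G D A S"
    using gs A AD S one two by (rule corner_faces_inI)
  then have "gprod G S \<otimes>\<^bsub>G\<^esub> A \<in> D"
    using fill[OF AD] S unfolding fills_corners_def by blast
  moreover have "gprod G S \<otimes>\<^bsub>G\<^esub> A = s1 \<otimes>\<^bsub>G\<^esub> (s2 \<otimes>\<^bsub>G\<^esub> (s3 \<otimes>\<^bsub>G\<^esub> A))"
    using glides(5,10,15) by (simp add: vertex_insert[OF gs S _ _ _ A] vertex_empty[OF group_axioms A] S_def)
  ultimately show "s1 \<otimes>\<^bsub>G\<^esub> s2 \<otimes>\<^bsub>G\<^esub> s3 \<otimes>\<^bsub>G\<^esub> A \<in> D"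
    using car A by (simp add: m_assoc)
qed

lemma link_flag_iff_fills:
  assumes reg: "regular_gliding G Gl Ind" and A: "A \<in> carrier G"
  shows "simplicial_flag (link_verts G Gl Ind D A) (link_cells G Gl Ind D A)
           (\<lambda>(B,S). (\<lambda>s. (B,{s})) ` S) (\<lambda>(B,S). card S) \<longleftrightarrow> fills_corners G Gl Ind D A"
  using fills_imp_link_flag[OF reg A] link_flag_imp_fills[OF reg A] by blast

lemma nonpositively_curved_iff_cube_condition:
  assumes gs: "gliding_system G Gl Ind" and reg: "regular_gliding G Gl Ind" and DG: "D \<subseteq> carrier G"
  shows "nonpositively_curved G Gl Ind D \<longleftrightarrow> cube_condition G Gl Ind D"
proof -
  have "nonpositively_curved G Gl Ind D \<longleftrightarrow> (\<forall>A\<in>D. fills_corners G Gl Ind D A)"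
    unfolding nonpositively_curved_def using link_flag_iff_fills[OF reg] DG by blast
  also have "\<dots> \<longleftrightarrow> cube_condition G Gl Ind D"
    using fills_imp_cube_condition[OF gs DG] cube_condition_fills[OF gs] DG by blast
  finally show ?thesis .
qed

lemma cube_condition_carrier:
  assumes gs: "gliding_system G Gl Ind"
  shows "cube_condition G Gl Ind (carrier G)"
  unfolding cube_condition_def
proof (intro ballI allI impI, elim conjE)
  interpret group G by (rule gliding_systemD(1)[OF gs])
  fix A s1 s2 s3 assume "A \<in> carrier G" "(s1,s2) \<in> Ind" "(s1,s3) \<in> Ind" "(s2,s3) \<in> Ind"
  then have "s1 \<in> Gl" "s2 \<in> Gl" "s3 \<in> Gl"
    using independent_glides(1,2)[OF gs] by blast+
  then show "s1 \<otimes>\<^bsub>G\<^esub> s2 \<otimes>\<^bsub>G\<^esub> s3 \<otimes>\<^bsub>G\<^esub> A \<in> carrier G"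
    using \<open>A \<in> carrier G\<close> gliding_systemD(2)[OF gs] by blast
qed

theorem corollary4p5:
  fixes G :: "('a,'b) monoid_scheme" and Gl :: "'a set" and Ind :: "('a \<times> 'a) set" and D :: "'a set"
  assumes "gliding_system G Gl Ind" and "regular_gliding G Gl Ind" and "D \<subseteq> carrier G"
  shows "(nonpositively_curved G Gl Ind D \<longleftrightarrow> cube_condition G Gl Ind D)
         \<and> nonpositively_curved G Gl Ind (carrier G)"
  using nonpositively_curved_iff_cube_condition[OF assms]
    nonpositively_curved_iff_cube_condition[OF assms(1,2) subset_refl]
    cube_condition_carrier[OF assms(1)] by blast

end
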